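(* Let $I$ be a conditional indicator w.r.t. $\mathcal{H}$ with domain $\mathbb{D}_I=\mathbb{L}^1(\mathbb{R},\mathcal{F})$ such that: (1) $I^*=I$; (2) $I$ is sub-additive (respectively super-additive); (3) $E(|I(X)|)\le E(|X|)$ for all $X\in\mathbb{L}^1(\mathbb{R},\mathcal{F})$. Then $I(X)=E(X\mid\mathcal{H})$ for all $X\in\mathbb{L}^1(\mathbb{R},\mathcal{F})$.
   Context: Let $(\Omega,\mathcal{F},\mathbb{P})$ be a probability space with $\mathcal{F}$ complete, and $\mathcal{H}\subseteq\mathcal{F}$ a complete sub-$\sigma$-algebra. $\overline{\mathbb{R}}=\mathbb{R}\cup\{\pm\infty\}$ with conventions $r\pm\infty=\pm\infty$, $\infty-\infty=0$, $\infty+\infty=\infty$, $0\times(\pm\infty)=0$; $\mathbb{L}^0(G,\mathcal{G})$ is the set of $\mathcal{G}$-measurable random variables a.s. valued in $G$, $\mathbb{L}^1(\mathbb{R},\mathcal{F})$ the integrable real ones. $\operatorname{ess\,sup}_{\mathcal{H}}(X)$ is the smallest $\mathcal{H}$-measurable random variable dominating $X$ a.s., $\operatorname{ess\,inf}_{\mathcal{H}}(X)=-\operatorname{ess\,sup}_{\mathcal{H}}(-X)$. A conditional indicator w.r.t. $\mathcal{H}$ is a map $I:\mathbb{D}_I\to\mathbb{L}^0(\overline{\mathbb{R}},\mathcal{H})$, $0\in\mathbb{D}_I\subseteq\mathbb{L}^0(\overline{\mathbb{R}},\mathcal{F})$, with $I(X)\in[\operatorname{ess\,inf}_{\mathcal{H}}(X),\operatorname{ess\,sup}_{\mathcal{H}}(X)]$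 a.s. and $\mathbb{D}_I+\mathbb{L}^0(\overline{\mathbb{R}},\mathcal{H})\subseteq\mathbb{D}_I$. The dual is $I^*(X)=-I(-X)$ on $-\mathbb{D}_I$. Sub-additive: $I(X+Y)\le I(X)+I(Y)$; super-additive: $I(X+Y)\ge I(X)+I(Y)$. *)

theory Defs
  imports "HOL-Probability.Probability"
begin

definition complete_meas :: "'a measure \<Rightarrow> bool" where
  "complete_meas M \<longleftrightarrow> (\<forall>A B. B \<in> null_sets M \<and> A \<subseteq> B \<longrightarrow> A \<in> sets M)"

definition complete_subalg :: "'a measure \<Rightarrow> 'a measure \<Rightarrow> bool" where
  "complete_subalg M H \<longleftrightarrow> subalgebra M H \<and> null_sets M \<subseteq> sets H"

definition is_cond_ess_sup :: "'a measure \<Rightarrow> 'a measure \<Rightarrow> ('a \<Rightarrow> ereal) \<Rightarrow> ('a \<Rightarrow> ereal) \<Rightarrow> bool" where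
  "is_cond_ess_sup M H X Z \<longleftrightarrow>
     Z \<in> borel_measurable H \<and> (AE x in M. X x \<le> Z x) \<and>
     (\<forall>W \<in> borel_measurable H. (AE x in M. X x \<le> W x) \<longrightarrow> (AE x in M. Z x \<le> W x))"

definition cond_ess_sup :: "'a measure \<Rightarrow> 'a measure \<Rightarrow> ('a \<Rightarrow> ereal) \<Rightarrow> ('a \<Rightarrow> ereal)" where
  "cond_ess_sup M H X = (SOME Z. is_cond_ess_sup M H X Z)"

definition cond_ess_inf :: "'a measure \<Rightarrow> 'a measure \<Rightarrow> ('a \<Rightarrow> ereal) \<Rightarrow> ('a \<Rightarrow> ereal)" where
  "cond_ess_inf M H X = (\<lambda>x. - cond_ess_sup M H (\<lambda>y. - X y) x)"

definition cond_indicator_L1 :: "'a measure \<Rightarrow> 'a measure \<Rightarrow> (('a \<Rightarrow> real) \<Rightarrow> 'a \<Rightarrow> ereal) \<Rightarrow> bool" where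
  "cond_indicator_L1 M H I \<longleftrightarrow>
     (\<forall>X. integrable M X \<longrightarrow>
        I X \<in> borel_measurable H \<and>
        (AE x in M. cond_ess_inf M H (\<lambda>y. ereal (X y)) x \<le> I X x \<and>
                    I X x \<le> cond_ess_sup M H (\<lambda>y. ereal (X y)) x))"

end

theory Submission
  imports Defs
begin

text \<open>
  Self-duality turns one-sided additivity into additivity, and the L1 bound makes I finite
  almost everywhere, so its real part J is an additive L1-contraction with H-measurable values
  that fixes every integrable H-measurable variable (for those the conditional essential
  infimum and supremum coincide). Applying the contraction to the nonnegative shifts c + X and
  c - X of a variable bounded by c gives E[J X] = E[X]; consequently J is positive on bounded
  variables, hence monotone there, and squeezing 1_A X between -c 1_A and c 1_A for A in H
  yields J(1_A X) = 1_A J X. Thus E[1_A J X] = E[1_A X] for bounded X, and by truncation and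
  the contraction for every integrable X, which characterises E[X | H].
\<close>

lemma integral_abs_diff_truncation_tendsto_0:
  fixes X :: "'a \<Rightarrow> real"
  assumes "integrable M X"
  shows "(\<lambda>n. \<integral>x. \<bar>X x - max (- real n) (min (X x) (real n))\<bar> \<partial>M) \<longlonglongrightarrow> 0"
proof -
  have "(\<lambda>n. \<integral>x. \<bar>X x - max (- real n) (min (X x) (real n))\<bar> \<partial>M) \<longlonglongrightarrow> (\<integral>x. 0 \<partial>M)"
  proof (rule integral_dominated_convergence[where w="\<lambda>x. \<bar>X x\<bar>"])
    show "AE x in M. (\<lambda>n. \<bar>X x - max (- real n) (min (X x) (real n))\<bar>) \<longlonglongrightarrow> 0"
    proof (rule AE_I2)
      fix x
      obtain N where "\<bar>X x\<bar> \<le> real N" using real_arch_simple by blast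
      then have "\<forall>n\<ge>N. \<bar>X x - max (- real n) (min (X x) (real n))\<bar> = 0"
        by auto
      then show "(\<lambda>n. \<bar>X x - max (- real n) (min (X x) (real n))\<bar>) \<longlonglongrightarrow> 0"
        by (intro tendsto_eventually) (auto simp: eventually_sequentially)
    qed
  qed (use assms in auto)
  then show ?thesis by simp
qed

locale additive_contractive_projection = finite_measure_subalgebra M H
  for M H :: "'a measure" +
  fixes J :: "('a \<Rightarrow> real) \<Rightarrow> 'a \<Rightarrow> real"
  assumes measurable_J: "integrable M X \<Longrightarrow> J X \<in> borel_measurable H"
    and integrable_J: "integrable M X \<Longrightarrow> integrable M (J X)"
    and J_add: "integrable M X \<Longrightarrow> integrable M Y \<Longrightarrow>
      AE x in M. J (\<lambda>y. X y + Y y) x = J X x + J Y x"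
    and J_fixes: "integrable M Z \<Longrightarrow> Z \<in> borel_measurable H \<Longrightarrow> AE x in M. J Z x = Z x"
    and integral_abs_J_le: "integrable M X \<Longrightarrow> (\<integral>x. \<bar>J X x\<bar> \<partial>M) \<le> (\<integral>x. \<bar>X x\<bar> \<partial>M)"
begin

lemma measurable_from_H: "f \<in> borel_measurable H \<Longrightarrow> f \<in> borel_measurable M"
  using measurable_from_subalg[OF subalg] by blast

lemma sets_H_subset: "A \<in> sets H \<Longrightarrow> A \<in> sets M"
  using subalg by (auto simp: subalgebra_def)

lemma J_diff:
  assumes "integrable M X" "integrable M Y"
  shows "AE x in M. J (\<lambda>y. X y - Y y) x = J X x - J Y x"
  using J_add[of "\<lambda>y. X y - Y y" Y] assms by auto

lemma J_add_const:
  assumes "integrable M X"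
  shows "AE x in M. J (\<lambda>y. X y + c) x = J X x + c"
  using J_add[OF assms, of "\<lambda>_. c"] J_fixes[of "\<lambda>_. c"] by auto

lemma J_const_diff:
  assumes "integrable M X"
  shows "AE x in M. J (\<lambda>y. c - X y) x = c - J X x"
  using J_diff[OF _ assms, of "\<lambda>_. c"] J_fixes[of "\<lambda>_. c"] by auto

lemma integral_J_le:
  assumes "integrable M Y" "\<And>x. 0 \<le> Y x"
  shows "(\<integral>x. J Y x \<partial>M) \<le> (\<integral>x. Y x \<partial>M)"
proof -
  have "(\<integral>x. J Y x \<partial>M) \<le> (\<integral>x. \<bar>J Y x\<bar> \<partial>M)"
    using integrable_J[OF assms(1)] by (intro integral_mono) auto
  also have "\<dots> \<le> (\<integral>x. \<bar>Y x\<bar> \<partial>M)"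
    using integral_abs_J_le[OF assms(1)] .
  finally show ?thesis
    using assms(2) by simp
qed

lemma integral_J_bounded:
  assumes X: "integrable M X" and bound: "\<And>x. \<bar>X x\<bar> \<le> c"
  shows "(\<integral>x. J X x \<partial>M) = (\<integral>x. X x \<partial>M)"
proof -
  let ?\<mu> = "measure M (space M)"
  have shifts_nonneg: "0 \<le> X x + c" "0 \<le> c - X x" for x
    using bound[of x] by (auto simp: abs_le_iff)
  have "(\<integral>x. J X x \<partial>M) + ?\<mu> * c = (\<integral>x. J (\<lambda>y. X y + c) x \<partial>M)"
    using J_add_const[OF X] X integrable_J[OF X] integrable_J[of "\<lambda>y. X y + c"]
    by (subst integral_cong_AE[where g="\<lambda>x. J X x + c"]) (auto simp: measurable_from_H measurable_J)
  also have "\<dots> \<le> (\<integral>x. X x + c \<partial>M)"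
    using X shifts_nonneg by (intro integral_J_le) auto
  also have "\<dots> = (\<integral>x. X x \<partial>M) + ?\<mu> * c"
    using X by simp
  finally have upper: "(\<integral>x. J X x \<partial>M) \<le> (\<integral>x. X x \<partial>M)" by simp
  have "?\<mu> * c - (\<integral>x. J X x \<partial>M) = (\<integral>x. J (\<lambda>y. c - X y) x \<partial>M)"
    using J_const_diff[OF X] X integrable_J[OF X] integrable_J[of "\<lambda>y. c - X y"]
    by (subst integral_cong_AE[where g="\<lambda>x. c - J X x"]) (auto simp: measurable_from_H measurable_J)
  also have "\<dots> \<le> (\<integral>x. c - X x \<partial>M)"
    using X shifts_nonneg by (intro integral_J_le) auto
  also have "\<dots> = ?\<mu> * c - (\<integral>x. X x \<partial>M)"
    using X by simp
  finally have lower: "(\<integral>x. X x \<partial>M) \<le> (\<integral>x. J X x \<partial>M)" by simp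
  from upper lower show ?thesis by linarith
qed

lemma J_nonneg:
  assumes Y: "integrable M Y" and "\<And>x. 0 \<le> Y x" and "\<And>x. Y x \<le> c"
  shows "AE x in M. 0 \<le> J Y x"
proof -
  have JY: "integrable M (J Y)"
    using integrable_J[OF Y] .
  have "(\<integral>x. \<bar>J Y x\<bar> \<partial>M) \<le> (\<integral>x. J Y x \<partial>M)"
    using integral_abs_J_le[OF Y] integral_J_bounded[OF Y, of c] assms(2,3) by simp
  moreover have "(\<integral>x. \<bar>J Y x\<bar> - J Y x \<partial>M) = (\<integral>x. \<bar>J Y x\<bar> \<partial>M) - (\<integral>x. J Y x \<partial>M)"
    using JY by simp
  moreover have "0 \<le> (\<integral>x. \<bar>J Y x\<bar> - J Y x \<partial>M)"
    by (intro integral_nonneg_AE) auto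
  ultimately have "(\<integral>x. \<bar>J Y x\<bar> - J Y x \<partial>M) = 0"
    by linarith
  then have "AE x in M. \<bar>J Y x\<bar> - J Y x = 0"
    using JY by (subst (asm) integral_nonneg_eq_0_iff_AE) auto
  then show ?thesis
    by eventually_elim auto
qed

lemma J_abs_le:
  assumes X: "integrable M X" and Z: "Z \<in> borel_measurable H"
    and dom: "\<And>x. \<bar>X x\<bar> \<le> Z x" and bound: "\<And>x. Z x \<le> c"
  shows "AE x in M. \<bar>J X x\<bar> \<le> Z x"
proof -
  have ranges: "\<bar>Z x\<bar> \<le> c" "0 \<le> Z x - X x" "Z x - X x \<le> 2 * c"
    "0 \<le> Z x + X x" "Z x + X x \<le> 2 * c" for x
    using dom[of x] bound[of x] by (auto simp: abs_le_iff)
  have Z_int: "integrable M Z"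
    using Z ranges(1) measurable_from_H by (intro integrable_const_bound[where B=c]) auto
  have "AE x in M. 0 \<le> J (\<lambda>y. Z y - X y) x"
    using X Z_int ranges by (intro J_nonneg[where c="2 * c"]) auto
  moreover have "AE x in M. 0 \<le> J (\<lambda>y. Z y + X y) x"
    using X Z_int ranges by (intro J_nonneg[where c="2 * c"]) auto
  ultimately show ?thesis
    using J_diff[OF Z_int X] J_add[OF Z_int X] J_fixes[OF Z_int Z] by eventually_elim auto
qed

lemma J_indicator_mult:
  assumes A: "A \<in> sets H" and X: "integrable M X" and bound: "\<And>x. \<bar>X x\<bar> \<le> c"
  shows "AE x in M. J (\<lambda>y. indicator A y * X y) x = indicator A x * J X x"
proof -
  have c_nonneg: "0 \<le> c"
    using order_trans[OF abs_ge_zero bound] .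
  let ?XA = "\<lambda>y. indicator A y * X y" and ?XB = "\<lambda>y. (1 - indicator A y) * X y"
  have XA: "integrable M ?XA" and XB: "integrable M ?XB"
    using X sets_H_subset[OF A] by (auto intro: integrable_real_mult_indicator
        simp: mult.commute[of "indicator A _"] left_diff_distrib)
  have "AE x in M. \<bar>J ?XA x\<bar> \<le> c * indicator A x"
    using A bound c_nonneg by (intro J_abs_le[OF XA, where c=c]) (auto simp: indicator_def)
  moreover have "AE x in M. \<bar>J ?XB x\<bar> \<le> c * (1 - indicator A x)"
    using A bound c_nonneg by (intro J_abs_le[OF XB, where c=c]) (auto simp: indicator_def)
  moreover have "AE x in M. J (\<lambda>y. ?XA y + ?XB y) x = J ?XA x + J ?XB x"
    using J_add[OF XA XB] .
  ultimately show ?thesis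
    by eventually_elim (auto simp: indicator_def algebra_simps)
qed

lemma set_integral_J_bounded:
  assumes A: "A \<in> sets H" and X: "integrable M X" and bound: "\<And>x. \<bar>X x\<bar> \<le> c"
  shows "(\<integral>x. indicator A x * J X x \<partial>M) = (\<integral>x. indicator A x * X x \<partial>M)"
proof -
  have c_nonneg: "0 \<le> c"
    using order_trans[OF abs_ge_zero bound] .
  have XA: "integrable M (\<lambda>y. indicator A y * X y)"
    using X sets_H_subset[OF A] by (auto intro: integrable_real_mult_indicator simp: mult.commute)
  have "(\<integral>x. indicator A x * J X x \<partial>M) = (\<integral>x. J (\<lambda>y. indicator A y * X y) x \<partial>M)"
    using J_indicator_mult[OF A X bound] sets_H_subset[OF A] measurable_from_H[OF measurable_J]
      XA X by (intro integral_cong_AE) auto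
  also have "\<dots> = (\<integral>x. indicator A x * X x \<partial>M)"
    using bound c_nonneg by (intro integral_J_bounded[OF XA, where c=c]) (auto simp: indicator_def)
  finally show ?thesis .
qed

lemma integral_abs_J_diff_le:
  assumes X: "integrable M X" and Y: "integrable M Y"
  shows "(\<integral>x. \<bar>J X x - J Y x\<bar> \<partial>M) \<le> (\<integral>x. \<bar>X x - Y x\<bar> \<partial>M)"
proof -
  have "(\<integral>x. \<bar>J X x - J Y x\<bar> \<partial>M) = (\<integral>x. \<bar>J (\<lambda>y. X y - Y y) x\<bar> \<partial>M)"
    using J_diff[OF X Y] X Y measurable_from_H[OF measurable_J]
    by (intro integral_cong_AE) auto
  also have "\<dots> \<le> (\<integral>x. \<bar>X x - Y x\<bar> \<partial>M)"
    using X Y by (intro integral_abs_J_le) auto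
  finally show ?thesis .
qed

lemma set_integral_J:
  assumes A: "A \<in> sets H" and X: "integrable M X"
  shows "(\<integral>x. indicator A x * J X x \<partial>M) = (\<integral>x. indicator A x * X x \<partial>M)"
proof -
  define T :: "nat \<Rightarrow> 'a \<Rightarrow> real" where "T n = (\<lambda>x. max (- real n) (min (X x) (real n)))" for n
  define err where "err n = (\<integral>x. \<bar>X x - T n x\<bar> \<partial>M)" for n
  have "\<bar>(\<integral>x. indicator A x * J X x \<partial>M) - (\<integral>x. indicator A x * X x \<partial>M)\<bar> \<le> 2 * err n" for n
  proof -
    have T_bound: "\<bar>T n x\<bar> \<le> real n" for x
      by (auto simp: T_def)
    have T_int: "integrable M (T n)"
      using X T_bound by (intro integrable_const_bound[where B="real n"]) (auto simp: T_def)
    have AM: "A \<in> sets M"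
      using sets_H_subset[OF A] .
    have int_A: "integrable M (\<lambda>x. indicator A x * f x)" if "integrable M f" for f :: "'a \<Rightarrow> real"
      using integrable_real_mult_indicator[OF AM that] by (simp add: mult.commute)
    have abs_int_A_le: "\<bar>\<integral>x. indicator A x * f x \<partial>M\<bar> \<le> (\<integral>x. \<bar>f x\<bar> \<partial>M)"
      if "integrable M f" for f :: "'a \<Rightarrow> real"
      using that int_A[OF that] by (intro order_trans[OF integral_abs_bound] integral_mono)
        (auto simp: indicator_def)
    have JX: "integrable M (J X)" and JT: "integrable M (J (T n))"
      using integrable_J X T_int by auto
    have "(\<integral>x. indicator A x * (J X x - J (T n) x) \<partial>M)
        = (\<integral>x. indicator A x * J X x \<partial>M) - (\<integral>x. indicator A x * J (T n) x \<partial>M)"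
      unfolding right_diff_distrib by (rule Bochner_Integration.integral_diff[OF int_A[OF JX] int_A[OF JT]])
    moreover have "(\<integral>x. indicator A x * (X x - T n x) \<partial>M)
        = (\<integral>x. indicator A x * X x \<partial>M) - (\<integral>x. indicator A x * T n x \<partial>M)"
      unfolding right_diff_distrib by (rule Bochner_Integration.integral_diff[OF int_A[OF X] int_A[OF T_int]])
    moreover have "\<bar>\<integral>x. indicator A x * (J X x - J (T n) x) \<partial>M\<bar> \<le> err n"
      using abs_int_A_le[of "\<lambda>x. J X x - J (T n) x"] JX JT integral_abs_J_diff_le[OF X T_int]
      unfolding err_def by auto
    moreover have "\<bar>\<integral>x. indicator A x * (X x - T n x) \<partial>M\<bar> \<le> err n"
      using abs_int_A_le[of "\<lambda>x. X x - T n x"] X T_int unfolding err_def by auto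
    ultimately show ?thesis
      using set_integral_J_bounded[OF A T_int T_bound] by linarith
  qed
  moreover have "err \<longlonglongrightarrow> 0"
    using integral_abs_diff_truncation_tendsto_0[OF X] unfolding err_def T_def .
  then have "(\<lambda>n. 2 * err n) \<longlonglongrightarrow> 0"
    using tendsto_mult_right_zero by blast
  ultimately show ?thesis
    using LIMSEQ_le_const[of "\<lambda>n. 2 * err n" 0] by force
qed

lemma real_cond_exp_eq_J:
  assumes X: "integrable M X"
  shows "AE x in M. real_cond_exp M H X x = J X x"
  using X integrable_J measurable_J set_integral_J
  by (intro real_cond_exp_charact) (auto simp: set_lebesgue_integral_def)

end

lemma cond_ess_sup_measurable:
  assumes "Z \<in> borel_measurable H"
  shows "AE x in M. cond_ess_sup M H Z x = Z x"
proof -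
  have Z: "is_cond_ess_sup M H Z Z"
    using assms unfolding is_cond_ess_sup_def by auto
  then have "is_cond_ess_sup M H Z (cond_ess_sup M H Z)"
    unfolding cond_ess_sup_def by (rule someI[where P="is_cond_ess_sup M H Z"])
  with Z have "AE x in M. cond_ess_sup M H Z x \<le> Z x" "AE x in M. Z x \<le> cond_ess_sup M H Z x"
    unfolding is_cond_ess_sup_def by blast+
  then show ?thesis
    by eventually_elim auto
qed

lemma cond_indicator_L1_measurable:
  assumes "cond_indicator_L1 M H I" "integrable M Z" "Z \<in> borel_measurable H"
  shows "AE x in M. I Z x = ereal (Z x)"
proof -
  have "(\<lambda>y. ereal (Z y)) \<in> borel_measurable H" "(\<lambda>y. - ereal (Z y)) \<in> borel_measurable H"
    using assms(3) by auto
  note sup_eq = this[THEN cond_ess_sup_measurable[where M=M]]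
  have "AE x in M. cond_ess_inf M H (\<lambda>y. ereal (Z y)) x \<le> I Z x \<and>
      I Z x \<le> cond_ess_sup M H (\<lambda>y. ereal (Z y)) x"
    using assms(1,2) unfolding cond_indicator_L1_def by blast
  with sup_eq show ?thesis
    by eventually_elim (auto simp: cond_ess_inf_def)
qed

lemma AE_finite_if_nn_integral_abs_finite:
  fixes f :: "'a \<Rightarrow> ereal"
  assumes "f \<in> borel_measurable M" "(\<integral>\<^sup>+ x. e2ennreal \<bar>f x\<bar> \<partial>M) < \<infinity>"
  shows "AE x in M. \<bar>f x\<bar> \<noteq> \<infinity>"
proof -
  have "AE x in M. e2ennreal \<bar>f x\<bar> \<noteq> \<infinity>"
    using assms by (intro nn_integral_noteq_infinite) auto
  then show ?thesis
    by eventually_elim auto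
qed

locale self_dual_contractive_indicator = prob_space M
  for M H :: "'a measure" and I :: "('a \<Rightarrow> real) \<Rightarrow> 'a \<Rightarrow> ereal" +
  assumes subalg: "subalgebra M H"
    and indicator: "cond_indicator_L1 M H I"
    and self_dual: "integrable M X \<Longrightarrow> AE x in M. I X x = - I (\<lambda>y. - X y) x"
    and additivity:
      "(\<forall>X Y. integrable M X \<longrightarrow> integrable M Y \<longrightarrow>
          (AE x in M. I (\<lambda>y. X y + Y y) x \<le> I X x + I Y x))
     \<or> (\<forall>X Y. integrable M X \<longrightarrow> integrable M Y \<longrightarrow>
          (AE x in M. I (\<lambda>y. X y + Y y) x \<ge> I X x + I Y x))"
    and contraction: "integrable M X \<Longrightarrow>
      (\<integral>\<^sup>+ x. e2ennreal \<bar>I X x\<bar> \<partial>M) \<le> (\<integral>\<^sup>+ x. ennreal \<bar>X x\<bar> \<partial>M)"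
begin

definition I_real :: "('a \<Rightarrow> real) \<Rightarrow> 'a \<Rightarrow> real" where
  "I_real X x = real_of_ereal (I X x)"

lemma measurable_I: "integrable M X \<Longrightarrow> I X \<in> borel_measurable H"
  using indicator unfolding cond_indicator_L1_def by blast

lemma measurable_I_real: "integrable M X \<Longrightarrow> I_real X \<in> borel_measurable H"
  unfolding I_real_def[abs_def] using measurable_I by measurable

lemma I_eq_I_real:
  assumes X: "integrable M X"
  shows "AE x in M. I X x = ereal (I_real X x)"
proof -
  have "(\<integral>\<^sup>+ x. e2ennreal \<bar>I X x\<bar> \<partial>M) < \<infinity>"
    using contraction[OF X] X by (auto simp: integrable_iff_bounded)
  then have "AE x in M. \<bar>I X x\<bar> \<noteq> \<infinity>"
    using measurable_I[OF X] measurable_from_subalg[OF subalg]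
    by (intro AE_finite_if_nn_integral_abs_finite) auto
  then show ?thesis
    by eventually_elim (auto simp: I_real_def ereal_real)
qed

lemma nn_integral_abs_I_real_le:
  assumes X: "integrable M X"
  shows "(\<integral>\<^sup>+ x. ennreal \<bar>I_real X x\<bar> \<partial>M) \<le> (\<integral>\<^sup>+ x. ennreal \<bar>X x\<bar> \<partial>M)"
proof -
  have "(\<integral>\<^sup>+ x. ennreal \<bar>I_real X x\<bar> \<partial>M) = (\<integral>\<^sup>+ x. e2ennreal \<bar>I X x\<bar> \<partial>M)"
    using I_eq_I_real[OF X] by (intro nn_integral_cong_AE) auto
  then show ?thesis
    using contraction[OF X] by simp
qed

lemma integrable_I_real:
  assumes X: "integrable M X"
  shows "integrable M (I_real X)"
proof -
  have "(\<integral>\<^sup>+ x. ennreal \<bar>X x\<bar> \<partial>M) < \<infinity>"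
    using X by (simp add: integrable_iff_bounded)
  then have "(\<integral>\<^sup>+ x. ennreal \<bar>I_real X x\<bar> \<partial>M) < \<infinity>"
    using nn_integral_abs_I_real_le[OF X] by (rule le_less_trans[rotated])
  then show ?thesis
    using measurable_I_real[OF X] measurable_from_subalg[OF subalg]
    by (auto simp: integrable_iff_bounded)
qed

lemma integral_abs_I_real_le:
  assumes X: "integrable M X"
  shows "(\<integral>x. \<bar>I_real X x\<bar> \<partial>M) \<le> (\<integral>x. \<bar>X x\<bar> \<partial>M)"
proof -
  have "ennreal (\<integral>x. \<bar>I_real X x\<bar> \<partial>M) \<le> ennreal (\<integral>x. \<bar>X x\<bar> \<partial>M)"
    using nn_integral_abs_I_real_le[OF X] integrable_I_real[OF X] X
    by (subst (1 2) nn_integral_eq_integral[symmetric]) auto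
  then show ?thesis
    by (simp add: ennreal_le_iff integral_nonneg_AE)
qed

lemma I_real_add:
  assumes X: "integrable M X" and Y: "integrable M Y"
  shows "AE x in M. I_real (\<lambda>y. X y + Y y) x = I_real X x + I_real Y x"
proof -
  have XY: "integrable M (\<lambda>y. X y + Y y)" and nY: "integrable M (\<lambda>y. - Y y)"
    using X Y by auto
  obtain R :: "ereal \<Rightarrow> ereal \<Rightarrow> bool" where R: "R = (\<le>) \<or> R = (\<ge>)"
    and add_R: "\<And>X Y. integrable M X \<Longrightarrow> integrable M Y \<Longrightarrow>
      AE x in M. R (I (\<lambda>y. X y + Y y) x) (I X x + I Y x)"
    using additivity by blast
  \<comment> \<open>by self-duality, the instance X = (X + Y) + (- Y) is the reverse inequality\<close>
  have "AE x in M. R (I (\<lambda>y. X y + Y y + - Y y) x) (I (\<lambda>y. X y + Y y) x + I (\<lambda>y. - Y y) x)"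
    using add_R[OF XY nY] .
  then have "AE x in M. R (I X x) (I (\<lambda>y. X y + Y y) x + I (\<lambda>y. - Y y) x)"
    by simp
  with add_R[OF X Y] have both: "AE x in M.
      R (ereal (I_real (\<lambda>y. X y + Y y) x)) (ereal (I_real X x + I_real Y x)) \<and>
      R (ereal (I_real X x)) (ereal (I_real (\<lambda>y. X y + Y y) x - I_real Y x))"
    using I_eq_I_real[OF X] I_eq_I_real[OF Y] I_eq_I_real[OF XY] I_eq_I_real[OF nY] self_dual[OF Y]
    by eventually_elim (simp, metis diff_minus_eq_add)
  from R show ?thesis
  proof
    assume R_le: "R = (\<le>)"
    from both[unfolded R_le] show ?thesis
      by eventually_elim simp
  next
    assume R_ge: "R = (\<ge>)"
    from both[unfolded R_ge] show ?thesis
      by eventually_elim simp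
  qed
qed

lemma I_real_fixes:
  assumes "integrable M Z" "Z \<in> borel_measurable H"
  shows "AE x in M. I_real Z x = Z x"
  using cond_indicator_L1_measurable[OF indicator assms] by eventually_elim (simp add: I_real_def)

sublocale additive_contractive_projection M H I_real
  by unfold_locales (auto intro: subalg measurable_I_real integrable_I_real I_real_add I_real_fixes
      integral_abs_I_real_le)

lemma I_eq_real_cond_exp:
  assumes "integrable M X"
  shows "AE x in M. I X x = ereal (real_cond_exp M H X x)"
  using I_eq_I_real[OF assms] real_cond_exp_eq_J[OF assms] by eventually_elim simp

end

theorem mainTheorem11:
  fixes M H :: "'a measure" and I :: "('a \<Rightarrow> real) \<Rightarrow> 'a \<Rightarrow> ereal"
  assumes "prob_space M"
    and "complete_meas M"
    and "complete_subalg M H"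
    and "cond_indicator_L1 M H I"
    and self_dual: "\<forall>X. integrable M X \<longrightarrow> (AE x in M. I X x = - I (\<lambda>y. - X y) x)"
    and additivity:
      "(\<forall>X Y. integrable M X \<longrightarrow> integrable M Y \<longrightarrow>
          (AE x in M. I (\<lambda>y. X y + Y y) x \<le> I X x + I Y x))
     \<or> (\<forall>X Y. integrable M X \<longrightarrow> integrable M Y \<longrightarrow>
          (AE x in M. I (\<lambda>y. X y + Y y) x \<ge> I X x + I Y x))"
    and contraction: "\<forall>X. integrable M X \<longrightarrow>
          (\<integral>\<^sup>+ x. e2ennreal \<bar>I X x\<bar> \<partial>M) \<le> (\<integral>\<^sup>+ x. ennreal \<bar>X x\<bar> \<partial>M)"
  shows "\<forall>X. integrable M X \<longrightarrow> (AE x in M. I X x = ereal (real_cond_exp M H X x))"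
proof -
  interpret self_dual_contractive_indicator M H I
    using assms
    by (intro self_dual_contractive_indicator.intro self_dual_contractive_indicator_axioms.intro)
      (auto simp: complete_subalg_def)
  show ?thesis
    using I_eq_real_cond_exp by blast
qed

end
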